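(* A matroid $\mathsf{M}$ is isomorphic to a matroid of the form $\mathsf{U}_{0,m}\oplus\mathsf{U}_{r,s}\oplus\mathsf{U}_{\ell,\ell}$ (a uniform matroid with additional loops and coloops) if and only if $\mathsf{M}$ has no minor isomorphic to $\mathsf{T}_{2,4}$ or to $\mathsf{U}_{1,2}\oplus\mathsf{U}_{1,2}$.
   Context: $\mathsf{U}_{r,m}$ is the uniform matroid of rank $r$ on $m$ elements. $\mathsf{T}_{k,n}$ denotes the minimal matroid: the matroid on $[n]$ whose bases are the $k$-subsets $B$ with $|B\cap\{1,\dots,k\}|\ge k-1$; equivalently the cycle matroid of a cycle of length $k+1$ in which one edge is replaced by $n-k$ parallel edges. In particular $\mathsf{T}_{2,4}$ is the graphic matroid of a triangle with one edge doubled. *)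

theory Defs
  imports Main
begin

type_synonym 'a matroid = "'a set \<times> 'a set set"

definition ground :: "'a matroid \<Rightarrow> 'a set" where
  "ground M = fst M"

definition indep :: "'a matroid \<Rightarrow> 'a set set" where
  "indep M = snd M"

definition matroid :: "'a matroid \<Rightarrow> bool" where
  "matroid M \<longleftrightarrow>
     finite (ground M) \<and>
     (\<forall>X\<in>indep M. X \<subseteq> ground M) \<and>
     {} \<in> indep M \<and>
     (\<forall>X Y. Y \<in> indep M \<longrightarrow> X \<subseteq> Y \<longrightarrow> X \<in> indep M) \<and>
     (\<forall>X Y. X \<in> indep M \<longrightarrow> Y \<in> indep M \<longrightarrow> card X < card Y \<longrightarrow>
        (\<exists>y\<in>Y - X. insert y X \<in> indep M))"

definition rk :: "'a matroid \<Rightarrow> 'a set \<Rightarrow> nat" where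
  "rk M X = Max {card Y | Y. Y \<subseteq> X \<and> Y \<in> indep M}"

text \<open>The minor (M / C) \ D, for disjoint C, D contained in the ground set.
A set X \<subseteq> E - C - D is independent in M / C \ D iff r(X \<union> C) = |X| + r(C).\<close>
definition minor_by :: "'a matroid \<Rightarrow> 'a set \<Rightarrow> 'a set \<Rightarrow> 'a matroid" where
  "minor_by M C D =
     (ground M - C - D,
      {X. X \<subseteq> ground M - C - D \<and> rk M (X \<union> C) = card X + rk M C})"

definition is_minor :: "'a matroid \<Rightarrow> 'a matroid \<Rightarrow> bool" where
  "is_minor N M \<longleftrightarrow>
     (\<exists>C D. C \<subseteq> ground M \<and> D \<subseteq> ground M \<and> C \<inter> D = {} \<and> N = minor_by M C D)"

definition matroid_iso :: "'a matroid \<Rightarrow> 'b matroid \<Rightarrow> bool" where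
  "matroid_iso M N \<longleftrightarrow>
     (\<exists>f. bij_betw f (ground M) (ground N) \<and>
          (\<forall>X. X \<subseteq> ground M \<longrightarrow> (X \<in> indep M \<longleftrightarrow> f ` X \<in> indep N)))"

definition uniform :: "nat \<Rightarrow> nat \<Rightarrow> nat matroid" where
  "uniform r m = ({1..m}, {X. X \<subseteq> {1..m} \<and> card X \<le> r})"

definition minimal_matroid :: "nat \<Rightarrow> nat \<Rightarrow> nat matroid" where
  "minimal_matroid k n =
     ({1..n}, {X. \<exists>B. X \<subseteq> B \<and> B \<subseteq> {1..n} \<and> card B = k \<and>
                     card (B \<inter> {1..k}) \<ge> k - 1})"

definition direct_sum :: "'a matroid \<Rightarrow> 'b matroid \<Rightarrow> ('a + 'b) matroid" where
  "direct_sum M N =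
     (Inl ` ground M \<union> Inr ` ground N,
      {X. X \<subseteq> Inl ` ground M \<union> Inr ` ground N \<and>
          {x. Inl x \<in> X} \<in> indep M \<and> {y. Inr y \<in> X} \<in> indep N})"

end

theory Submission
  imports Defs
begin

text \<open>
Write the ground set of a matroid as L \<union> S \<union> K, where L are the loops, K the coloops and S
the core (everything else). M has the stated form exactly when its independent sets are the sets
that avoid L and meet S in at most r = r(S) elements. This description is inherited by minors
and transported along isomorphisms, and neither excluded matroid admits it: a parallel pair
forces r = 1 and lies in S, after which every element independent of one of its members must
be a coloop, which fails in both T_{2,4} and U_{1,2} \<oplus> U_{1,2}.

Conversely, if M restricted to S is not uniform of rank r(S), a circuit of S of size at most
r(S) yields an independent I \<subseteq> S with |I| = r(S) - 2 and elements a, b that are parallel in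
M / I. Augmenting I + a inside a basis of S gives an element c. Since c is not a coloop,
r(S - c) = r(S), so I + a is not maximal in S - c, which produces a second such element d.
Then (M / I)|{a, b, c, d} has rank 2, a and b are parallel and c, d are parallel to neither,
so this minor is T_{2,4} or U_{1,2} \<oplus> U_{1,2} according as c, d are independent or
parallel in M / I.
\<close>

section \<open>Independence and rank\<close>

lemma rk_eqI:
  assumes "\<And>Y. Y \<subseteq> A \<Longrightarrow> Y \<in> indep M \<Longrightarrow> card Y \<le> n"
    and "Y \<subseteq> A" "Y \<in> indep M" "card Y = n"
  shows "rk M A = n"
  unfolding rk_def
proof (rule Max_eqI)
  have "{card Y |Y. Y \<subseteq> A \<and> Y \<in> indep M} \<subseteq> {..n}"
    using assms(1) by (auto simp: atMost_iff)
  then show "finite {card Y |Y. Y \<subseteq> A \<and> Y \<in> indep M}"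
    using finite_subset by blast
  show "m \<le> n" if "m \<in> {card Y |Y. Y \<subseteq> A \<and> Y \<in> indep M}" for m
    using that assms(1) by blast
  show "n \<in> {card Y |Y. Y \<subseteq> A \<and> Y \<in> indep M}"
    using assms(2-4) by blast
qed

locale finite_matroid =
  fixes M :: "'a matroid"
  assumes matroid_M: "matroid M"
begin

lemma finite_ground: "finite (ground M)"
  using matroid_M by (simp add: matroid_def)

lemma indep_subset_ground: "X \<in> indep M \<Longrightarrow> X \<subseteq> ground M"
  using matroid_M by (simp add: matroid_def)

lemma empty_indep: "{} \<in> indep M"
  using matroid_M by (simp add: matroid_def)

lemma indep_subset: "Y \<in> indep M \<Longrightarrow> X \<subseteq> Y \<Longrightarrow> X \<in> indep M"
  using matroid_M unfolding matroid_def by simp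

lemma indep_augment:
  "X \<in> indep M \<Longrightarrow> Y \<in> indep M \<Longrightarrow> card X < card Y \<Longrightarrow> \<exists>y\<in>Y - X. insert y X \<in> indep M"
  using matroid_M unfolding matroid_def by simp

lemma indep_finite: "X \<in> indep M \<Longrightarrow> finite X"
  using finite_subset[OF indep_subset_ground finite_ground] .

lemma finite_indep_cards: "finite {card Y |Y. Y \<subseteq> A \<and> Y \<in> indep M}"
proof (rule finite_subset)
  show "{card Y |Y. Y \<subseteq> A \<and> Y \<in> indep M} \<subseteq> {..card (ground M)}"
    using card_mono[OF finite_ground indep_subset_ground] by (auto simp: atMost_iff)
qed simp

lemma rk_ge_card:
  assumes "X \<subseteq> A" "X \<in> indep M"
  shows "card X \<le> rk M A"
proof -
  have "card X \<in> {card Y |Y. Y \<subseteq> A \<and> Y \<in> indep M}" using assms by auto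
  then show ?thesis unfolding rk_def by (rule Max_ge[OF finite_indep_cards])
qed

lemma rk_witness:
  obtains Y where "Y \<subseteq> A" "Y \<in> indep M" "card Y = rk M A"
proof -
  have "{card Y |Y. Y \<subseteq> A \<and> Y \<in> indep M} \<noteq> {}" using empty_indep by auto
  then have "rk M A \<in> {card Y |Y. Y \<subseteq> A \<and> Y \<in> indep M}"
    unfolding rk_def by (rule Max_in[OF finite_indep_cards])
  then obtain Y where "Y \<subseteq> A" "Y \<in> indep M" "rk M A = card Y" by auto
  then show thesis using that by simp
qed

lemma rk_indep: "X \<in> indep M \<Longrightarrow> rk M X = card X"
  by (rule rk_eqI[of X]) (auto intro: card_mono indep_finite)

lemma rk_mono:
  assumes "A \<subseteq> B"
  shows "rk M A \<le> rk M B"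
proof -
  obtain Y where "Y \<subseteq> A" "Y \<in> indep M" "card Y = rk M A" by (rule rk_witness)
  then show ?thesis using rk_ge_card[of Y B] assms by simp
qed

lemma indep_if_rk_eq_card:
  assumes "finite X" "rk M X = card X"
  shows "X \<in> indep M"
proof -
  obtain Y where "Y \<subseteq> X" "Y \<in> indep M" "card Y = rk M X" by (rule rk_witness)
  then have "Y = X" using card_subset_eq[OF assms(1)] assms(2) by simp
  with \<open>Y \<in> indep M\<close> show ?thesis by simp
qed

lemma rk_Un_eq_iff_indep:
  assumes "C \<in> indep M" "X \<inter> C = {}" "finite X"
  shows "rk M (X \<union> C) = card X + rk M C \<longleftrightarrow> X \<union> C \<in> indep M"
proof -
  have card: "card (X \<union> C) = card X + rk M C"
    using card_Un_disjoint[OF assms(3) indep_finite[OF assms(1)] assms(2)] rk_indep[OF assms(1)]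
    by simp
  show ?thesis
  proof
    assume "rk M (X \<union> C) = card X + rk M C"
    then have "rk M (X \<union> C) = card (X \<union> C)" using card by simp
    then show "X \<union> C \<in> indep M"
      using indep_if_rk_eq_card assms(3) indep_finite[OF assms(1)] by blast
  next
    assume "X \<union> C \<in> indep M"
    then show "rk M (X \<union> C) = card X + rk M C" using rk_indep card by presburger
  qed
qed

lemma rk_eq_card_if_maximal:
  assumes "J \<subseteq> A" "J \<in> indep M" "\<And>e. e \<in> A - J \<Longrightarrow> insert e J \<notin> indep M"
  shows "rk M A = card J"
proof (rule rk_eqI[OF _ assms(1,2) refl])
  fix Y assume "Y \<subseteq> A" "Y \<in> indep M"
  show "card Y \<le> card J"
  proof (rule ccontr)
    assume "\<not> card Y \<le> card J"
    then obtain y where "y \<in> Y - J" "insert y J \<in> indep M"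
      using indep_augment[OF assms(2) \<open>Y \<in> indep M\<close>] by auto
    then show False using assms(3) \<open>Y \<subseteq> A\<close> by blast
  qed
qed

lemma indep_extend_to_card:
  assumes "X \<in> indep M" "Y \<in> indep M" "card X \<le> n" "n \<le> card Y"
  shows "\<exists>T. X \<subseteq> T \<and> T \<subseteq> X \<union> Y \<and> T \<in> indep M \<and> card T = n"
  using assms(1,3)
proof (induction "n - card X" arbitrary: X)
  case 0
  then show ?case by (intro exI[of _ X]) auto
next
  case (Suc k)
  then have "card X < card Y" using assms(4) by linarith
  then obtain y where y: "y \<in> Y - X" "insert y X \<in> indep M"
    using indep_augment[OF Suc.prems(1) assms(2)] by blast
  have "card (insert y X) = Suc (card X)" using y indep_finite[OF Suc.prems(1)] by simp
  then have "k = n - card (insert y X)" "card (insert y X) \<le> n" using Suc.hyps(2) by linarith+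
  then obtain T where "insert y X \<subseteq> T" "T \<subseteq> insert y X \<union> Y" "T \<in> indep M" "card T = n"
    using Suc.hyps(1) y(2) by blast
  then show ?case using y by (intro exI[of _ T]) auto
qed

lemma exists_circuit_subset:
  assumes "finite Y" "Y \<notin> indep M"
  shows "\<exists>C. C \<subseteq> Y \<and> C \<notin> indep M \<and> (\<forall>x\<in>C. C - {x} \<in> indep M)"
  using assms
proof (induction "card Y" arbitrary: Y rule: less_induct)
  case less
  show ?case
  proof (cases "\<forall>x\<in>Y. Y - {x} \<in> indep M")
    case True
    then show ?thesis using less.prems by blast
  next
    case False
    then obtain x where x: "x \<in> Y" "Y - {x} \<notin> indep M" by blast
    have "card (Y - {x}) < card Y" using card_Diff1_less[OF less.prems(1) x(1)] .
    then obtain C where "C \<subseteq> Y - {x}" "C \<notin> indep M" "\<forall>x\<in>C. C - {x} \<in> indep M"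
      using less.hyps[of "Y - {x}"] less.prems(1) x(2) by auto
    then show ?thesis by blast
  qed
qed

lemma contract_restrict_minor:
  assumes I: "I \<in> indep M" and Q: "Q \<subseteq> ground M - I"
  defines "N \<equiv> minor_by M I (ground M - I - Q)"
  shows "is_minor N M" "ground N = Q" "\<And>X. X \<subseteq> Q \<Longrightarrow> X \<in> indep N \<longleftrightarrow> X \<union> I \<in> indep M"
proof -
  have I_ground: "I \<subseteq> ground M" by (rule indep_subset_ground[OF I])
  show "is_minor N M" unfolding is_minor_def N_def using I_ground by (intro exI conjI) auto
  have E: "ground M - I - (ground M - I - Q) = Q" using Q by blast
  then show "ground N = Q" by (simp add: N_def minor_by_def ground_def)
  fix X assume X: "X \<subseteq> Q"
  have "X \<in> indep N \<longleftrightarrow> rk M (X \<union> I) = card X + rk M I"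
    using X E by (auto simp: N_def minor_by_def indep_def)
  also have "\<dots> \<longleftrightarrow> X \<union> I \<in> indep M"
  proof (rule rk_Un_eq_iff_indep[OF I])
    show "X \<inter> I = {}" using X Q by blast
    show "finite X" using X Q finite_ground by (meson Diff_subset finite_subset subset_trans)
  qed
  finally show "X \<in> indep N \<longleftrightarrow> X \<union> I \<in> indep M" .
qed

end

section \<open>Uniform matroids with loops and coloops\<close>

text \<open>
  The ground set is partitioned into loops L, coloops K and a part S carrying the uniform matroid
  of rank r, so that M is U_{0,|L|} \<oplus> U_{r,|S|} \<oplus> U_{|K|,|K|}. No bound r \<le> |S| is imposed.
\<close>

definition loop_uniform_coloop :: "'a matroid \<Rightarrow> 'a set \<Rightarrow> 'a set \<Rightarrow> 'a set \<Rightarrow> nat \<Rightarrow> bool" where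
  "loop_uniform_coloop M L S K r \<longleftrightarrow>
     finite (ground M) \<and> L \<inter> S = {} \<and> L \<inter> K = {} \<and> S \<inter> K = {} \<and> L \<union> S \<union> K = ground M \<and>
     (\<forall>X. X \<in> indep M \<longleftrightarrow> X \<subseteq> ground M \<and> X \<inter> L = {} \<and> card (X \<inter> S) \<le> r)"

lemma loop_uniform_coloop_indep_iff:
  "loop_uniform_coloop M L S K r \<Longrightarrow>
    X \<in> indep M \<longleftrightarrow> X \<subseteq> ground M \<and> X \<inter> L = {} \<and> card (X \<inter> S) \<le> r"
  unfolding loop_uniform_coloop_def by (elim conjE allE)

lemma loop_uniform_coloopD:
  assumes "loop_uniform_coloop M L S K r"
  shows "finite (ground M)" "L \<inter> S = {}" "L \<inter> K = {}" "S \<inter> K = {}" "ground M = L \<union> S \<union> K"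
  using assms unfolding loop_uniform_coloop_def by simp_all

lemma loop_uniform_coloop_rk:
  assumes u: "loop_uniform_coloop M L S K r" and X: "X \<subseteq> ground M"
  shows "rk M X = card (X \<inter> K) + min r (card (X \<inter> S))"
proof -
  note fin = loop_uniform_coloopD(1)[OF u] and E = loop_uniform_coloopD(5)[OF u]
    and LS = loop_uniform_coloopD(2)[OF u] and LK = loop_uniform_coloopD(3)[OF u]
    and SK = loop_uniform_coloopD(4)[OF u]
  have fX: "finite X" using finite_subset[OF X fin] .
  obtain Z where Z: "Z \<subseteq> X \<inter> S" "card Z = min r (card (X \<inter> S))" and fZ: "finite Z"
    by (rule obtain_subset_with_card_n[OF min.cobounded2])
  show ?thesis
  proof (rule rk_eqI[where Y = "(X \<inter> K) \<union> Z"])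
    fix Y assume Y: "Y \<subseteq> X" "Y \<in> indep M"
    then have YL: "Y \<inter> L = {}" and YS: "card (Y \<inter> S) \<le> r"
      unfolding loop_uniform_coloop_indep_iff[OF u] by simp_all
    have "Y - S \<subseteq> X \<inter> K" using YL Y(1) X E by blast
    then have "card (Y - S) \<le> card (X \<inter> K)" using fX by (intro card_mono) simp_all
    moreover have "card (Y \<inter> S) \<le> card (X \<inter> S)" using Y(1) fX by (intro card_mono) auto
    moreover have "card Y = card (Y \<inter> S) + card (Y - S)"
      using finite_subset[OF Y(1) fX] by (rule card_Int_Diff)
    ultimately show "card Y \<le> card (X \<inter> K) + min r (card (X \<inter> S))"
      using YS by linarith
  next
    have "(X \<inter> K) \<inter> Z = {}" using Z(1) SK by blast
    then show "card ((X \<inter> K) \<union> Z) = card (X \<inter> K) + min r (card (X \<inter> S))"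
      using card_Un_disjoint[OF _ fZ] fX Z(2) by simp
  next
    show "(X \<inter> K) \<union> Z \<subseteq> X" using Z(1) by blast
  next
    have "((X \<inter> K) \<union> Z) \<inter> S = Z" "((X \<inter> K) \<union> Z) \<inter> L = {}"
      using Z(1) SK LS LK by blast+
    moreover have "(X \<inter> K) \<union> Z \<subseteq> ground M" using Z(1) X by blast
    ultimately show "(X \<inter> K) \<union> Z \<in> indep M"
      unfolding loop_uniform_coloop_indep_iff[OF u] using Z(2) by simp
  qed
qed

lemma loop_uniform_coloop_rk_contract_iff:
  assumes u: "loop_uniform_coloop M L S K r" and C: "C \<subseteq> ground M" and X: "X \<subseteq> ground M - C"
  shows "rk M (X \<union> C) = card X + rk M C \<longleftrightarrow> X \<inter> L = {} \<and> card (X \<inter> S) \<le> r - card (C \<inter> S)"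
proof -
  note fin = loop_uniform_coloopD(1)[OF u] and E = loop_uniform_coloopD(5)[OF u]
    and LS = loop_uniform_coloopD(2)[OF u] and LK = loop_uniform_coloopD(3)[OF u]
    and SK = loop_uniform_coloopD(4)[OF u]
  have "X \<subseteq> ground M" using X by blast
  then have fX: "finite X" using fin by (rule finite_subset)
  have fC: "finite C" using C fin by (rule finite_subset)
  have card_Un_Int: "card ((X \<union> C) \<inter> A) = card (X \<inter> A) + card (C \<inter> A)" for A
  proof -
    have "(X \<union> C) \<inter> A = (X \<inter> A) \<union> (C \<inter> A)" "(X \<inter> A) \<inter> (C \<inter> A) = {}" using X by blast+
    then show ?thesis using card_Un_disjoint[of "X \<inter> A" "C \<inter> A"] fX fC by simp
  qed
  have "X - L = (X \<inter> S) \<union> (X \<inter> K)" using X E LS LK by blast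
  then have card_X: "card X = card (X \<inter> L) + (card (X \<inter> S) + card (X \<inter> K))"
    using card_Int_Diff[OF fX, of L] card_Un_disjoint[of "X \<inter> S" "X \<inter> K"] fX SK by auto
  have no_loops: "X \<inter> L = {} \<longleftrightarrow> card (X \<inter> L) = 0" using fX by simp
  have "X \<union> C \<subseteq> ground M" using X C by blast
  then have rk_XC: "rk M (X \<union> C) =
      card (X \<inter> K) + card (C \<inter> K) + min r (card (X \<inter> S) + card (C \<inter> S))"
    using loop_uniform_coloop_rk[OF u, of "X \<union> C"] card_Un_Int by simp
  have rk_C: "rk M C = card (C \<inter> K) + min r (card (C \<inter> S))" using loop_uniform_coloop_rk[OF u C] .
  have cancel: "xk + ck + min r (xs + cs) = xl + (xs + xk) + (ck + min r cs) \<longleftrightarrow> xl = 0 \<and> xs \<le> r - cs"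
    for xk ck xs cs xl :: nat
    by (cases "r \<le> cs"; cases "r \<le> xs + cs") (auto simp: min_def)
  show ?thesis unfolding rk_XC rk_C card_X no_loops by (rule cancel)
qed

lemma loop_uniform_coloop_minor:
  assumes u: "loop_uniform_coloop M L S K r" and C: "C \<subseteq> ground M" and D: "D \<subseteq> ground M"
  shows "loop_uniform_coloop (minor_by M C D)
    (L - C - D) (S - C - D) (K - C - D) (r - card (C \<inter> S))"
  unfolding loop_uniform_coloop_def
proof (intro conjI allI)
  have ground_minor: "ground (minor_by M C D) = ground M - C - D"
    by (simp add: minor_by_def ground_def)
  show "X \<in> indep (minor_by M C D) \<longleftrightarrow> X \<subseteq> ground (minor_by M C D) \<and>
      X \<inter> (L - C - D) = {} \<and> card (X \<inter> (S - C - D)) \<le> r - card (C \<inter> S)" for X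
  proof (cases "X \<subseteq> ground M - C - D")
    case True
    then have "X \<inter> (L - C - D) = X \<inter> L" "X \<inter> (S - C - D) = X \<inter> S" "X \<subseteq> ground M - C" by blast+
    with True show ?thesis
      using loop_uniform_coloop_rk_contract_iff[OF u C] ground_minor
      by (simp add: minor_by_def indep_def)
  qed (simp add: ground_minor, simp add: minor_by_def indep_def)
qed (use loop_uniform_coloopD[OF u] in \<open>auto simp: minor_by_def ground_def\<close>)

lemma matroid_iso_sym:
  assumes "matroid_iso M N"
  shows "matroid_iso N M"
proof -
  obtain f where f: "bij_betw f (ground M) (ground N)"
    and pres: "\<And>X. X \<subseteq> ground M \<Longrightarrow> X \<in> indep M \<longleftrightarrow> f ` X \<in> indep N"
    using assms unfolding matroid_iso_def by blast
  define g where "g = inv_into (ground M) f"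
  have g: "bij_betw g (ground N) (ground M)" unfolding g_def by (rule bij_betw_inv_into[OF f])
  have "Y \<in> indep N \<longleftrightarrow> g ` Y \<in> indep M" if Y: "Y \<subseteq> ground N" for Y
  proof -
    have "f ` g ` Y = Y"
      unfolding g_def by (rule image_inv_into_cancel[OF bij_betw_imp_surj_on[OF f] Y])
    moreover have "g ` Y \<subseteq> ground M" using Y bij_betw_imp_surj_on[OF g] by blast
    ultimately show ?thesis using pres[of "g ` Y"] by simp
  qed
  then show ?thesis unfolding matroid_iso_def using g by blast
qed

lemma loop_uniform_coloop_transport:
  assumes iso: "matroid_iso M T" and u: "loop_uniform_coloop T L S K r"
    and indep_ground: "\<And>X. X \<in> indep M \<Longrightarrow> X \<subseteq> ground M"
  shows "\<exists>L S K. loop_uniform_coloop M L S K r"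
proof -
  obtain f where f: "bij_betw f (ground M) (ground T)"
    and pres: "\<And>X. X \<subseteq> ground M \<Longrightarrow> X \<in> indep M \<longleftrightarrow> f ` X \<in> indep T"
    using iso unfolding matroid_iso_def by blast
  have inj: "inj_on f (ground M)" and im: "f ` ground M = ground T"
    using f by (simp_all add: bij_betw_def)
  note fin = loop_uniform_coloopD(1)[OF u] and E = loop_uniform_coloopD(5)[OF u]
    and LS = loop_uniform_coloopD(2)[OF u] and LK = loop_uniform_coloopD(3)[OF u]
    and SK = loop_uniform_coloopD(4)[OF u]
  let ?E = "ground M"
  let ?L = "?E \<inter> f -` L" and ?S = "?E \<inter> f -` S" and ?K = "?E \<inter> f -` K"
  have "X \<in> indep M \<longleftrightarrow> X \<subseteq> ?E \<and> X \<inter> ?L = {} \<and> card (X \<inter> ?S) \<le> r" for X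
  proof (cases "X \<subseteq> ?E")
    case X: True
    have "f ` X \<inter> L = {} \<longleftrightarrow> X \<inter> ?L = {}" using X by blast
    moreover have "f ` X \<inter> S = f ` (X \<inter> ?S)" using X by blast
    moreover have "card (f ` (X \<inter> ?S)) = card (X \<inter> ?S)"
      by (rule card_image) (rule inj_on_subset[OF inj], blast)
    moreover have "f ` X \<subseteq> ground T" using X im by blast
    ultimately show ?thesis unfolding pres[OF X] loop_uniform_coloop_indep_iff[OF u] using X by simp
  qed (use indep_ground in blast)
  moreover have "finite ?E" using fin bij_betw_finite[OF f] by simp
  moreover have "?L \<inter> ?S = {}" "?L \<inter> ?K = {}" "?S \<inter> ?K = {}" using LS LK SK by blast+
  moreover have "?L \<union> ?S \<union> ?K = ?E" using E im by blast
  ultimately have "loop_uniform_coloop M ?L ?S ?K r" unfolding loop_uniform_coloop_def by blast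
  then show ?thesis by blast
qed

lemma loop_uniform_coloop_iso:
  assumes u: "loop_uniform_coloop M L S K r" and v: "loop_uniform_coloop N L' S' K' r"
    and cards: "card L = card L'" "card S = card S'" "card K = card K'"
  shows "matroid_iso M N"
proof -
  note fin = loop_uniform_coloopD(1)[OF u] and E = loop_uniform_coloopD(5)[OF u]
    and LS = loop_uniform_coloopD(2)[OF u] and LK = loop_uniform_coloopD(3)[OF u]
    and SK = loop_uniform_coloopD(4)[OF u]
  note fin' = loop_uniform_coloopD(1)[OF v] and E' = loop_uniform_coloopD(5)[OF v]
    and LS' = loop_uniform_coloopD(2)[OF v] and LK' = loop_uniform_coloopD(3)[OF v]
    and SK' = loop_uniform_coloopD(4)[OF v]
  have "finite L" "finite S" "finite K" "finite L'" "finite S'" "finite K'"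
    using fin fin' E E' by simp_all
  then obtain gL gS gK where gL: "bij_betw gL L L'" and gS: "bij_betw gS S S'"
    and gK: "bij_betw gK K K'"
    using finite_same_card_bij cards by metis
  define f where "f x = (if x \<in> L then gL x else if x \<in> S then gS x else gK x)" for x
  have bL: "bij_betw f L L'" using gL by (rule bij_betw_cong[THEN iffD2, rotated]) (simp add: f_def)
  have bS: "bij_betw f S S'" using LS
    by (intro bij_betw_cong[THEN iffD2, OF _ gS]) (auto simp: f_def)
  have bK: "bij_betw f K K'" using LK SK
    by (intro bij_betw_cong[THEN iffD2, OF _ gK]) (auto simp: f_def)
  have fL: "f ` L = L'" and fS: "f ` S = S'" using bL bS by (simp_all add: bij_betw_def)
  have f: "bij_betw f (ground M) (ground N)"
    unfolding E E' using bij_betw_combine[OF bij_betw_combine[OF bL bS LS'] bK] LK' SK' by blast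
  have inj: "inj_on f (ground M)" using bij_betw_imp_inj_on[OF f] .
  have "X \<in> indep M \<longleftrightarrow> f ` X \<in> indep N" if X: "X \<subseteq> ground M" for X
  proof -
    have "f ` X \<inter> L' = f ` (X \<inter> L)" "f ` X \<inter> S' = f ` (X \<inter> S)"
      unfolding fL[symmetric] fS[symmetric] using inj_on_image_Int[OF inj X] E by auto
    moreover have "card (f ` (X \<inter> S)) = card (X \<inter> S)"
      by (rule card_image) (rule inj_on_subset[OF inj], use X in blast)
    moreover have "f ` X \<subseteq> ground N" using X bij_betw_imp_surj_on[OF f] by blast
    ultimately show ?thesis
      unfolding loop_uniform_coloop_indep_iff[OF u] loop_uniform_coloop_indep_iff[OF v] using X
      by simp
  qed
  then show ?thesis unfolding matroid_iso_def using f by blast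
qed

lemma ground_direct_sum: "ground (direct_sum M N) = Inl ` ground M \<union> Inr ` ground N"
  by (simp add: direct_sum_def ground_def)

lemma indep_direct_sum_iff:
  "X \<in> indep (direct_sum M N) \<longleftrightarrow>
     X \<subseteq> Inl ` ground M \<union> Inr ` ground N \<and> {x. Inl x \<in> X} \<in> indep M \<and> {y. Inr y \<in> X} \<in> indep N"
  by (simp add: direct_sum_def ground_def indep_def)

lemma ground_uniform: "ground (uniform r m) = {1..m}"
  by (simp add: uniform_def ground_def)

lemma indep_uniform_iff: "X \<in> indep (uniform r m) \<longleftrightarrow> X \<subseteq> {1..m} \<and> card X \<le> r"
  by (simp add: uniform_def indep_def)

lemma loop_uniform_coloop_normal_form:
  "loop_uniform_coloop (direct_sum (direct_sum (uniform 0 m) (uniform r s)) (uniform l l))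
     (Inl ` Inl ` {1..m}) (Inl ` Inr ` {1..s}) (Inr ` {1..l}) r"
proof -
  let ?N = "direct_sum (direct_sum (uniform 0 m) (uniform r s)) (uniform l l)"
  have E: "ground ?N = Inl ` Inl ` {1..m} \<union> Inl ` Inr ` {1..s} \<union> Inr ` {1..l}"
    by (auto simp: ground_direct_sum ground_uniform)
  have indep_N: "X \<in> indep ?N \<longleftrightarrow> X \<subseteq> ground ?N \<and>
      {z. Inl (Inl z) \<in> X} \<subseteq> {1..m} \<and> card {z. Inl (Inl z) \<in> X} \<le> 0 \<and>
      {z. Inl (Inr z) \<in> X} \<subseteq> {1..s} \<and> card {z. Inl (Inr z) \<in> X} \<le> r \<and>
      {z. Inr z \<in> X} \<subseteq> {1..l} \<and> card {z. Inr z \<in> X} \<le> l" for X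
    unfolding indep_direct_sum_iff indep_uniform_iff ground_direct_sum ground_uniform by auto
  have "X \<in> indep ?N \<longleftrightarrow> X \<subseteq> ground ?N \<and> X \<inter> Inl ` Inl ` {1..m} = {} \<and>
      card (X \<inter> Inl ` Inr ` {1..s}) \<le> r" for X
  proof (cases "X \<subseteq> ground ?N")
    case False
    then show ?thesis using indep_N[of X] by simp
  next
    case X: True
    have sub: "{z. Inl (Inl z) \<in> X} \<subseteq> {1..m}" "{z. Inl (Inr z) \<in> X} \<subseteq> {1..s}"
      "{z. Inr z \<in> X} \<subseteq> {1..l}"
      using X E by auto
    have "card {z. Inr z \<in> X} \<le> l" using card_mono[OF _ sub(3)] by simp
    moreover have "card {z. Inl (Inl z) \<in> X} \<le> 0 \<longleftrightarrow> X \<inter> Inl ` Inl ` {1..m} = {}"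
      using finite_subset[OF sub(1)] sub(1) by auto
    moreover have "X \<inter> Inl ` Inr ` {1..s} = (Inl \<circ> Inr) ` {z. Inl (Inr z) \<in> X}"
      using X E by auto
    then have "card (X \<inter> Inl ` Inr ` {1..s}) = card {z. Inl (Inr z) \<in> X}"
      by (simp add: card_image inj_on_def)
    ultimately show ?thesis unfolding indep_N using X sub by simp
  qed
  moreover have "finite (ground ?N)" unfolding E by simp
  moreover have "Inl ` Inl ` {1..m} \<inter> Inl ` Inr ` {1..s} = {}"
    "Inl ` Inl ` {1..m} \<inter> Inr ` {1..l} = {}"
    "Inl ` Inr ` {1..s} \<inter> Inr ` {1..l} = {}"
    by blast+
  ultimately show ?thesis unfolding loop_uniform_coloop_def E[symmetric] by blast
qed

lemma loop_uniform_coloop_iso_normal_form: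
  assumes "loop_uniform_coloop M L S K r"
  shows "matroid_iso M
    (direct_sum (direct_sum (uniform 0 (card L)) (uniform r (card S))) (uniform (card K) (card K)))"
  by (rule loop_uniform_coloop_iso[OF assms loop_uniform_coloop_normal_form])
    (simp_all add: card_image)

section \<open>The excluded minors\<close>

lemma ground_T24: "ground (minimal_matroid 2 4) = {1, 2, 3, 4}"
  by (auto simp: minimal_matroid_def ground_def)

lemma T24_base_superset:
  assumes X: "X \<subseteq> {1, 2, 3, 4::nat}" "card X \<le> 2" "\<not> {3, 4} \<subseteq> X"
  shows "\<exists>B. X \<subseteq> B \<and> B \<subseteq> {1, 2, 3, 4} \<and> card B = 2 \<and> B \<inter> {1, 2} \<noteq> {}"
proof (cases "card X = 2")
  case True
  have "X \<inter> {1, 2} \<noteq> {}"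
  proof
    assume "X \<inter> {1, 2} = {}"
    then have "X \<subseteq> {3, 4}" using X by blast
    then show False using card_subset_eq[of "{3, 4}" X] True X by simp
  qed
  then show ?thesis using X True by blast
next
  case False
  then have card_X: "card X \<le> 1" using X by simp
  show ?thesis
  proof (cases "X \<subseteq> {1, 2}")
    case True
    then show ?thesis by (intro exI[of _ "{1, 2}"]) auto
  next
    case False
    then obtain y where y: "y \<in> X" "y \<in> {3, 4}" using X by blast
    have "finite X" using X(1) by (rule finite_subset) simp
    then have "X = {y}" using y card_X card_le_Suc0_iff_eq[of X] by auto
    then show ?thesis using y by (intro exI[of _ "{1, y}"]) auto
  qed
qed

lemma indep_T24_iff:
  "X \<in> indep (minimal_matroid 2 4) \<longleftrightarrow> X \<subseteq> {1, 2, 3, 4} \<and> card X \<le> 2 \<and> \<not> {3, 4} \<subseteq> X"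
proof -
  have "{1..4} = {1, 2, 3, 4::nat}" "{1..2} = {1, 2::nat}" by auto
  then have indep: "X \<in> indep (minimal_matroid 2 4) \<longleftrightarrow>
      (\<exists>B. X \<subseteq> B \<and> B \<subseteq> {1, 2, 3, 4} \<and> card B = 2 \<and> 1 \<le> card (B \<inter> {1, 2}))"
    by (simp add: minimal_matroid_def indep_def)
  show ?thesis
  proof
    assume "X \<in> indep (minimal_matroid 2 4)"
    then obtain B where B: "X \<subseteq> B" "B \<subseteq> {1, 2, 3, 4}" "card B = 2" "1 \<le> card (B \<inter> {1, 2})"
      using indep by blast
    have fB: "finite B" using B(2) by (rule finite_subset) simp
    have "\<not> {3, 4} \<subseteq> B"
    proof
      assume "{3, 4} \<subseteq> B"
      then have "B = {3, 4}" using card_subset_eq[OF fB, of "{3, 4}"] B(3) by simp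
      then show False using B(4) by simp
    qed
    then show "X \<subseteq> {1, 2, 3, 4} \<and> card X \<le> 2 \<and> \<not> {3, 4} \<subseteq> X"
      using B card_mono[OF fB B(1)] by auto
  next
    assume "X \<subseteq> {1, 2, 3, 4} \<and> card X \<le> 2 \<and> \<not> {3, 4} \<subseteq> X"
    then have "\<exists>B. X \<subseteq> B \<and> B \<subseteq> {1, 2, 3, 4} \<and> card B = 2 \<and> B \<inter> {1, 2} \<noteq> {}"
      by (intro T24_base_superset) simp_all
    then obtain B where B: "X \<subseteq> B" "B \<subseteq> {1, 2, 3, 4}" "card B = 2" "B \<inter> {1, 2} \<noteq> {}"
      by blast
    have "1 \<le> card (B \<inter> {1, 2})" using B(4) by (simp add: Suc_le_eq card_gt_0_iff)
    then show "X \<in> indep (minimal_matroid 2 4)" unfolding indep using B(1-3) by blast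
  qed
qed

lemma card_le_1_iff_not_both:
  assumes "Z \<subseteq> {p, q}" "p \<noteq> q"
  shows "card Z \<le> 1 \<longleftrightarrow> \<not> {p, q} \<subseteq> Z"
proof
  assume "card Z \<le> 1"
  show "\<not> {p, q} \<subseteq> Z"
  proof
    assume "{p, q} \<subseteq> Z"
    then have "Z = {p, q}" using assms(1) by blast
    then show False using \<open>card Z \<le> 1\<close> assms(2) by simp
  qed
next
  assume "\<not> {p, q} \<subseteq> Z"
  then have "Z \<subseteq> {p} \<or> Z \<subseteq> {q}" using assms(1) by blast
  then show "card Z \<le> 1" using card_mono[of "{p}" Z] card_mono[of "{q}" Z] by auto
qed

lemma card_le_2_if_subset_doubleton:
  assumes "X \<subseteq> {p, q}"
  shows "card X \<le> 2"
proof -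
  have "card X \<le> card {p, q}" using assms by (rule card_mono[rotated]) simp
  also have "\<dots> \<le> 2" by (simp add: card_insert_if)
  finally show ?thesis .
qed

lemma subset_quadruple_cases:
  assumes "X \<subseteq> {a, b, c, d}" "\<not> {a, b} \<subseteq> X" "\<not> {c, d} \<subseteq> X"
  shows "X \<subseteq> {a, c} \<or> X \<subseteq> {a, d} \<or> X \<subseteq> {b, c} \<or> X \<subseteq> {b, d}"
  using assms by blast

lemma ground_U12_U12:
  "ground (direct_sum (uniform 1 2) (uniform 1 2)) = {Inl 1, Inl 2, Inr 1, Inr 2}"
  by (auto simp: ground_direct_sum ground_uniform)

lemma indep_U12_U12_iff:
  "X \<in> indep (direct_sum (uniform 1 2) (uniform 1 2)) \<longleftrightarrow>
     X \<subseteq> {Inl 1, Inl 2, Inr 1, Inr 2} \<and> \<not> {Inl 1, Inl 2} \<subseteq> X \<and> \<not> {Inr 1, Inr 2} \<subseteq> X"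
proof (cases "X \<subseteq> {Inl 1, Inl 2, Inr 1, Inr 2}")
  case True
  then have sub: "{x. Inl x \<in> X} \<subseteq> {1, 2}" "{y. Inr y \<in> X} \<subseteq> {1, 2}" by auto
  have "{1..2} = {1, 2::nat}" by auto
  then show ?thesis
    using True card_le_1_iff_not_both[OF sub(1)] card_le_1_iff_not_both[OF sub(2)] sub
    unfolding indep_direct_sum_iff ground_U12_U12[unfolded ground_direct_sum] indep_uniform_iff
    by auto
next
  case False
  then show ?thesis unfolding indep_direct_sum_iff ground_U12_U12[unfolded ground_direct_sum]
    by blast
qed

lemma loop_uniform_coloop_parallel:
  assumes u: "loop_uniform_coloop M L S K r" and "x \<noteq> y" "{x} \<in> indep M" "{y} \<in> indep M"
    "{x, y} \<notin> indep M"
  shows "x \<in> S \<and> y \<in> S \<and> r = 1"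
proof -
  have "{x, y} \<subseteq> ground M" "{x, y} \<inter> L = {}" "card ({x} \<inter> S) \<le> r" "card ({y} \<inter> S) \<le> r"
    "r < card ({x, y} \<inter> S)"
    using assms unfolding loop_uniform_coloop_indep_iff[OF u] by auto
  then show ?thesis using \<open>x \<noteq> y\<close> by (cases "x \<in> S"; cases "y \<in> S") auto
qed

lemma loop_uniform_coloop_coloop:
  assumes u: "loop_uniform_coloop M L S K 1" and "x \<in> S" "x \<noteq> z" "{x, z} \<in> indep M"
  shows "z \<in> K"
proof -
  have "{x, z} \<subseteq> ground M" "z \<notin> L" "card ({x, z} \<inter> S) \<le> 1"
    using assms(4) unfolding loop_uniform_coloop_indep_iff[OF u] by auto
  then show ?thesis using assms(2,3) loop_uniform_coloopD(5)[OF u] by (cases "z \<in> S") auto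
qed

lemma not_loop_uniform_coloop_T24: "\<not> loop_uniform_coloop (minimal_matroid 2 4) L S K r"
proof
  assume u: "loop_uniform_coloop (minimal_matroid 2 4) L S K r"
  have "3 \<in> S" "r = 1"
    using loop_uniform_coloop_parallel[OF u, of 3 4] by (simp_all add: indep_T24_iff)
  then have "1 \<in> K" "2 \<in> K"
    using loop_uniform_coloop_coloop[OF u[unfolded \<open>r = 1\<close>] \<open>3 \<in> S\<close>]
    by (simp_all add: indep_T24_iff)
  moreover note loop_uniform_coloopD(2-5)[OF u]
  ultimately have "{1, 2, 3} \<inter> S = {3}" "{1, 2, 3} \<inter> L = {}"
    "{1, 2, 3} \<subseteq> ground (minimal_matroid 2 4)"
    using \<open>3 \<in> S\<close> by (auto simp: ground_T24)
  then have "{1, 2, 3} \<in> indep (minimal_matroid 2 4)"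
    unfolding loop_uniform_coloop_indep_iff[OF u] using \<open>r = 1\<close> by simp
  then show False by (simp add: indep_T24_iff)
qed

lemma not_loop_uniform_coloop_U12_U12:
  "\<not> loop_uniform_coloop (direct_sum (uniform 1 2) (uniform 1 2)) L S K r"
proof
  assume u: "loop_uniform_coloop (direct_sum (uniform 1 2) (uniform 1 2)) L S K r"
  \<comment> \<open>unfold first: simp would turn the 1 of uniform 1 2 into Suc 0 and miss the rule\<close>
  have "Inl 1 \<in> S" "r = 1"
    using loop_uniform_coloop_parallel[OF u, of "Inl 1" "Inl 2"] unfolding indep_U12_U12_iff
    by simp_all
  moreover have "Inr 1 \<in> S"
    using loop_uniform_coloop_parallel[OF u, of "Inr 1" "Inr 2"] unfolding indep_U12_U12_iff by simp
  moreover have "Inr 1 \<in> K"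
    using loop_uniform_coloop_coloop[OF u[unfolded \<open>r = 1\<close>] \<open>Inl 1 \<in> S\<close>, of "Inr 1"]
    unfolding indep_U12_U12_iff by simp
  ultimately show False using loop_uniform_coloopD(4)[OF u] by blast
qed

lemma loop_uniform_coloop_minor_iso:
  assumes u: "loop_uniform_coloop M L S K r" and N: "is_minor N M" and iso: "matroid_iso N T"
    and T: "\<And>X. X \<in> indep T \<Longrightarrow> X \<subseteq> ground T"
  shows "\<exists>L S K r. loop_uniform_coloop T L S K r"
proof -
  obtain C D where "C \<subseteq> ground M" "D \<subseteq> ground M" "N = minor_by M C D"
    using N unfolding is_minor_def by blast
  then have "loop_uniform_coloop N (L - C - D) (S - C - D) (K - C - D) (r - card (C \<inter> S))"
    using loop_uniform_coloop_minor[OF u] by simp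
  then show ?thesis using loop_uniform_coloop_transport[OF matroid_iso_sym[OF iso] _ T] by blast
qed

lemma loop_uniform_coloop_no_forbidden_minor:
  assumes u: "loop_uniform_coloop M L S K r" and N: "is_minor N M"
  shows "\<not> matroid_iso N (minimal_matroid 2 4)"
    and "\<not> matroid_iso N (direct_sum (uniform 1 2) (uniform 1 2))"
proof -
  have "X \<subseteq> ground (minimal_matroid 2 4)" if "X \<in> indep (minimal_matroid 2 4)" for X
    using that unfolding indep_T24_iff ground_T24 by blast
  then show "\<not> matroid_iso N (minimal_matroid 2 4)"
    using loop_uniform_coloop_minor_iso[OF u N] not_loop_uniform_coloop_T24 by metis
  have "X \<subseteq> ground (direct_sum (uniform 1 2) (uniform 1 2))"
    if "X \<in> indep (direct_sum (uniform 1 2) (uniform 1 2))" for X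
    using that unfolding indep_U12_U12_iff ground_U12_U12 by blast
  then show "\<not> matroid_iso N (direct_sum (uniform 1 2) (uniform 1 2))"
    using loop_uniform_coloop_minor_iso[OF u N] not_loop_uniform_coloop_U12_U12 by metis
qed

section \<open>Loops, coloops and the core\<close>

definition loops :: "'a matroid \<Rightarrow> 'a set" where
  "loops M = {e \<in> ground M. {e} \<notin> indep M}"

definition coloops :: "'a matroid \<Rightarrow> 'a set" where
  "coloops M = {e \<in> ground M. rk M (ground M - {e}) < rk M (ground M)}"

definition core :: "'a matroid \<Rightarrow> 'a set" where
  "core M = ground M - loops M - coloops M"

text \<open>a and b are parallel elements of the contraction M / I.\<close>

definition parallel_over :: "'a matroid \<Rightarrow> 'a set \<Rightarrow> 'a \<Rightarrow> 'a \<Rightarrow> bool" where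
  "parallel_over M I a b \<longleftrightarrow> a \<noteq> b \<and> a \<notin> I \<and> b \<notin> I \<and>
     insert a I \<in> indep M \<and> insert b I \<in> indep M \<and> insert a (insert b I) \<notin> indep M"

text \<open>
  In M / I the set {a, b, c, d} has rank 2, a and b are parallel, and c and d are parallel to
  neither of them. Hence (M / I)|{a, b, c, d} is T_{2,4} if c and d are independent in M / I,
  and U_{1,2} \<oplus> U_{1,2} otherwise.
\<close>

definition parallel_pair_config :: "'a matroid \<Rightarrow> 'a set \<Rightarrow> 'a \<Rightarrow> 'a \<Rightarrow> 'a \<Rightarrow> 'a \<Rightarrow> bool" where
  "parallel_pair_config M I a b c d \<longleftrightarrow>
     {a, b, c, d} \<subseteq> ground M - I \<and> distinct [a, b, c, d] \<and>
     insert a (insert b I) \<notin> indep M \<and>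
     insert a (insert c I) \<in> indep M \<and> insert a (insert d I) \<in> indep M \<and>
     insert b (insert c I) \<in> indep M \<and> insert b (insert d I) \<in> indep M \<and>
     rk M (I \<union> {a, b, c, d}) \<le> card I + 2"

context finite_matroid
begin

lemma indep_disjoint_loops:
  assumes "X \<in> indep M"
  shows "X \<inter> loops M = {}"
proof -
  have "{e} \<in> indep M" if "e \<in> X" for e
    using indep_subset[OF assms, of "{e}"] that by simp
  then show ?thesis unfolding loops_def by blast
qed

lemma loops_disjoint_coloops: "loops M \<inter> coloops M = {}"
proof -
  obtain B where B: "B \<subseteq> ground M" "B \<in> indep M" "card B = rk M (ground M)"
    by (rule rk_witness)
  have "\<not> rk M (ground M - {e}) < rk M (ground M)" if "e \<in> loops M" for e
  proof -
    have "B \<subseteq> ground M - {e}" using B(1) indep_disjoint_loops[OF B(2)] that by blast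
    then have "card B \<le> rk M (ground M - {e})" by (rule rk_ge_card[OF _ B(2)])
    then show ?thesis using B(3) by simp
  qed
  then show ?thesis unfolding coloops_def by auto
qed

lemma indep_Un_coloops:
  assumes X: "X \<in> indep M"
  shows "X \<union> coloops M \<in> indep M"
proof -
  obtain B where B: "B \<subseteq> ground M" "B \<in> indep M" "card B = rk M (ground M)"
    by (rule rk_witness)
  have "card X \<le> rk M (ground M)" using rk_ge_card[OF indep_subset_ground[OF X] X] .
  then obtain T where T: "X \<subseteq> T" "T \<subseteq> X \<union> B" "T \<in> indep M" "card T = rk M (ground M)"
    using indep_extend_to_card[OF X B(2), of "rk M (ground M)"] B(3) by auto
  have "T \<subseteq> ground M" using T(2) B(1) indep_subset_ground[OF X] by blast
  have "k \<in> T" if k: "k \<in> coloops M" for k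
  proof (rule ccontr)
    assume "k \<notin> T"
    then have "T \<subseteq> ground M - {k}" using \<open>T \<subseteq> ground M\<close> by blast
    then have "card T \<le> rk M (ground M - {k})" by (rule rk_ge_card[OF _ T(3)])
    then show False using k T(4) unfolding coloops_def by simp
  qed
  then have "X \<union> coloops M \<subseteq> T" using T(1) by blast
  then show ?thesis using indep_subset[OF T(3)] by blast
qed

lemma loop_uniform_coloop_if_core_uniform:
  assumes uniform: "\<And>Y. Y \<subseteq> core M \<Longrightarrow> card Y \<le> rk M (core M) \<Longrightarrow> Y \<in> indep M"
  shows "loop_uniform_coloop M (loops M) (core M) (coloops M) (rk M (core M))"
proof -
  have "X \<in> indep M \<longleftrightarrow> X \<subseteq> ground M \<and> X \<inter> loops M = {} \<and> card (X \<inter> core M) \<le> rk M (core M)"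
    for X
  proof
    assume X: "X \<in> indep M"
    have "X \<inter> core M \<in> indep M" using indep_subset[OF X] by simp
    then have "card (X \<inter> core M) \<le> rk M (core M)" by (rule rk_ge_card[rotated]) simp
    then show "X \<subseteq> ground M \<and> X \<inter> loops M = {} \<and> card (X \<inter> core M) \<le> rk M (core M)"
      using indep_subset_ground[OF X] indep_disjoint_loops[OF X] by simp
  next
    assume X: "X \<subseteq> ground M \<and> X \<inter> loops M = {} \<and> card (X \<inter> core M) \<le> rk M (core M)"
    then have "X \<inter> core M \<in> indep M" using uniform[of "X \<inter> core M"] by simp
    then have "(X \<inter> core M) \<union> coloops M \<in> indep M" by (rule indep_Un_coloops)
    moreover have "X \<subseteq> (X \<inter> core M) \<union> coloops M" using X unfolding core_def by blast
    ultimately show "X \<in> indep M" by (rule indep_subset)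
  qed
  moreover have "loops M \<inter> core M = {}" "core M \<inter> coloops M = {}"
    "loops M \<union> core M \<union> coloops M = ground M"
    unfolding core_def loops_def coloops_def by blast+
  ultimately show ?thesis
    unfolding loop_uniform_coloop_def using loops_disjoint_coloops finite_ground by simp
qed

lemma rk_core_le_rk_core_Diff:
  assumes y: "y \<in> core M"
  shows "rk M (core M) \<le> rk M (core M - {y})"
proof -
  have fin_K: "finite (coloops M)" using finite_ground unfolding coloops_def by simp
  obtain B where B: "B \<subseteq> core M" "B \<in> indep M" "card B = rk M (core M)"
    by (rule rk_witness)
  obtain Z where Z: "Z \<subseteq> ground M - {y}" "Z \<in> indep M" "card Z = rk M (ground M - {y})"
    by (rule rk_witness)
  have BK: "B \<union> coloops M \<in> indep M" by (rule indep_Un_coloops[OF B(2)])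
  have "B \<inter> coloops M = {}" using B(1) unfolding core_def by blast
  then have "rk M (core M) + card (coloops M) = card (B \<union> coloops M)"
    using card_Un_disjoint[OF indep_finite[OF B(2)] fin_K] B(3) by simp
  also have "\<dots> \<le> rk M (ground M)"
    using rk_ge_card[OF indep_subset_ground[OF BK] BK] .
  also have "\<dots> \<le> rk M (ground M - {y})" using y unfolding core_def coloops_def by auto
  also have "\<dots> \<le> card (Z \<inter> (core M - {y})) + card (coloops M)"
  proof -
    have "Z \<subseteq> (Z \<inter> (core M - {y})) \<union> coloops M"
      using Z(1) indep_disjoint_loops[OF Z(2)] unfolding core_def by blast
    then have "card Z \<le> card ((Z \<inter> (core M - {y})) \<union> coloops M)"
      using indep_finite[OF Z(2)] fin_K by (intro card_mono) simp_all
    then show ?thesis using card_Un_le[of "Z \<inter> (core M - {y})" "coloops M"] Z(3) by simp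
  qed
  also have "card (Z \<inter> (core M - {y})) \<le> rk M (core M - {y})"
    using rk_ge_card[OF _ indep_subset[OF Z(2)]] by blast
  finally show ?thesis by simp
qed

lemma normal_form_if_core_uniform:
  assumes "\<And>Y. Y \<subseteq> core M \<Longrightarrow> card Y \<le> rk M (core M) \<Longrightarrow> Y \<in> indep M"
  shows "\<exists>m r s l. r \<le> s
    \<and> matroid_iso M (direct_sum (direct_sum (uniform 0 m) (uniform r s)) (uniform l l))"
proof -
  obtain B where B: "B \<subseteq> core M" "B \<in> indep M" "card B = rk M (core M)" by (rule rk_witness)
  have "finite (core M)" using finite_ground unfolding core_def by simp
  then have "rk M (core M) \<le> card (core M)" using card_mono[OF _ B(1)] B(3) by simp
  then show ?thesis
    using loop_uniform_coloop_iso_normal_form[OF loop_uniform_coloop_if_core_uniform[OF assms]]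
    by blast
qed

lemma parallel_over_exchange:
  assumes ab: "parallel_over M I a b" and "c \<noteq> a" "c \<notin> I" and ac: "insert a (insert c I) \<in> indep M"
  shows "insert b (insert c I) \<in> indep M"
proof -
  have b: "insert b I \<in> indep M" and "a \<notin> I" and ab_dep: "insert a (insert b I) \<notin> indep M"
    using ab unfolding parallel_over_def by simp_all
  then have "card (insert b I) < card (insert a (insert c I))"
    using indep_finite[OF b] assms(2,3) by (simp add: card_insert_if)
  then obtain y where "y \<in> insert a (insert c I) - insert b I" "insert y (insert b I) \<in> indep M"
    using indep_augment[OF b ac] by blast
  then show ?thesis using ab_dep by (auto simp: insert_commute)
qed

lemma dependent_contains_parallel_over:
  assumes Y: "finite Y" "Y \<notin> indep M" and singletons: "\<And>y. y \<in> Y \<Longrightarrow> {y} \<in> indep M"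
  obtains J a b where "insert a (insert b J) \<subseteq> Y" "parallel_over M J a b"
proof -
  obtain C where C: "C \<subseteq> Y" "C \<notin> indep M" "\<forall>x\<in>C. C - {x} \<in> indep M"
    using exists_circuit_subset[OF Y] by blast
  have "C \<noteq> {}" using C(2) empty_indep by auto
  then obtain a where a: "a \<in> C" by blast
  have "{a} \<in> indep M" using singletons a C(1) by blast
  then have "C \<noteq> {a}" using C(2) by auto
  then obtain b where b: "b \<in> C" "b \<noteq> a" using a by blast
  define J where "J = C - {a, b}"
  have "insert a J = C - {b}" "insert b J = C - {a}" "insert a (insert b J) = C"
    unfolding J_def using a b by auto
  then have "parallel_over M J a b"
    unfolding parallel_over_def J_def using C(2,3) a b by auto
  then show ?thesis using that \<open>insert a (insert b J) = C\<close> C(1) by blast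
qed

lemma parallel_over_extend:
  assumes ab: "parallel_over M J a b" and A: "insert a (insert b J) \<subseteq> A"
    and card_J: "card J + 2 \<le> rk M A"
  obtains I where "insert a (insert b I) \<subseteq> A" "parallel_over M I a b" "card I + 2 = rk M A"
proof -
  let ?r = "rk M A"
  have aJ: "insert a J \<in> indep M" and bJ: "insert b J \<in> indep M"
    and abJ: "insert a (insert b J) \<notin> indep M" and J: "a \<noteq> b" "a \<notin> J" "b \<notin> J"
    using ab unfolding parallel_over_def by simp_all
  have fJ: "finite J" using indep_finite[OF aJ] by simp
  obtain B where B: "B \<subseteq> A" "B \<in> indep M" "card B = ?r" by (rule rk_witness)
  have "card (insert a J) \<le> ?r" "card (insert b J) \<le> ?r - 1" using card_J fJ J by simp_all
  then obtain B1 where B1: "insert a J \<subseteq> B1" "B1 \<subseteq> insert a J \<union> B" "B1 \<in> indep M" "card B1 = ?r"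
    using indep_extend_to_card[OF aJ B(2), of ?r] B(3) by auto
  obtain T where T: "insert b J \<subseteq> T" "T \<subseteq> insert b J \<union> B1" "T \<in> indep M" "card T = ?r - 1"
    using indep_extend_to_card[OF bJ B1(3) \<open>card (insert b J) \<le> ?r - 1\<close>] B1(4) by auto
  have "a \<notin> T"
  proof
    assume "a \<in> T"
    then have "insert a (insert b J) \<subseteq> T" using T(1) by blast
    then show False using indep_subset[OF T(3)] abJ by simp
  qed
  define I where "I = T - {b}"
  have "b \<in> T" using T(1) by blast
  have "insert a I \<subseteq> B1" unfolding I_def using T(2) B1(1) by blast
  have "parallel_over M I a b"
    unfolding parallel_over_def
  proof (intro conjI)
    show "insert a I \<in> indep M" using indep_subset[OF B1(3) \<open>insert a I \<subseteq> B1\<close>] .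
    show "insert b I \<in> indep M" unfolding I_def using T(3) \<open>b \<in> T\<close> by (simp add: insert_absorb)
    have "insert a (insert b J) \<subseteq> insert a (insert b I)" using T(1) J unfolding I_def by blast
    then show "insert a (insert b I) \<notin> indep M" using indep_subset abJ by auto
  qed (use J \<open>a \<notin> T\<close> in \<open>auto simp: I_def\<close>)
  moreover have "card I + 2 = ?r"
    unfolding I_def using T(4) \<open>b \<in> T\<close> indep_finite[OF T(3)] card_J by simp
  moreover have "insert a (insert b I) \<subseteq> A"
    using \<open>insert a I \<subseteq> B1\<close> B1(2) B(1) A unfolding I_def by blast
  ultimately show ?thesis using that by blast
qed

lemma parallel_pair_config_exists:
  assumes ab: "parallel_over M I a b" and core: "insert a (insert b I) \<subseteq> core M"
    and card_I: "card I + 2 = rk M (core M)"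
  obtains c d where "parallel_pair_config M I a b c d"
proof -
  let ?P = "insert a I"
  have aI: "?P \<in> indep M" and dep: "insert a (insert b I) \<notin> indep M" and "a \<noteq> b" "a \<notin> I" "b \<notin> I"
    using ab unfolding parallel_over_def by simp_all
  have card_P: "card ?P + 1 = rk M (core M)" using card_I indep_finite[OF aI] \<open>a \<notin> I\<close> by simp
  obtain B where B: "B \<subseteq> core M" "B \<in> indep M" "card B = rk M (core M)" by (rule rk_witness)
  have "card ?P < card B" using card_P B(3) by simp
  then obtain c where c: "c \<in> B - ?P" "insert c ?P \<in> indep M"
    using indep_augment[OF aI B(2)] by blast
  have "c \<in> core M" using c(1) B(1) by blast
  have "\<exists>d \<in> core M - ?P. d \<noteq> c \<and> insert d ?P \<in> indep M"
  proof (rule ccontr)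
    assume "\<not> ?thesis"
    \<comment> \<open>then I + a would be a basis of core M - {c}, making c a coloop\<close>
    moreover have "?P \<subseteq> core M - {c}" using core c(1) by blast
    ultimately have "rk M (core M - {c}) = card ?P"
      using rk_eq_card_if_maximal[OF _ aI, of "core M - {c}"] by blast
    then show False
      using rk_core_le_rk_core_Diff[OF \<open>c \<in> core M\<close>] card_P by simp
  qed
  then obtain d where d: "d \<in> core M" "d \<notin> ?P" "d \<noteq> c" "insert d ?P \<in> indep M" by blast
  have ac: "insert a (insert c I) \<in> indep M" and ad: "insert a (insert d I) \<in> indep M"
    using c(2) d(4) by (simp_all add: insert_commute)
  have "c \<noteq> b" "d \<noteq> b" using ac ad dep by (auto simp: insert_commute)
  have "insert b (insert c I) \<in> indep M" "insert b (insert d I) \<in> indep M"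
    using parallel_over_exchange[OF ab _ _ ac] parallel_over_exchange[OF ab _ _ ad] c(1) d(2)
    by auto
  moreover have "rk M (I \<union> {a, b, c, d}) \<le> card I + 2"
    using rk_mono[of "I \<union> {a, b, c, d}" "core M"] core \<open>c \<in> core M\<close> d(1) card_I by simp
  moreover have "{a, b, c, d} \<subseteq> ground M - I" "distinct [a, b, c, d]"
    using core \<open>c \<in> core M\<close> c(1) d \<open>a \<noteq> b\<close> \<open>a \<notin> I\<close> \<open>b \<notin> I\<close> \<open>c \<noteq> b\<close> \<open>d \<noteq> b\<close>
    unfolding core_def by auto
  ultimately show ?thesis
    using that[of c d] dep ac ad unfolding parallel_pair_config_def by blast
qed

lemma parallel_pair_config_card_le_2:
  assumes cfg: "parallel_pair_config M I a b c d" and X: "X \<subseteq> {a, b, c, d}"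
    and indep: "X \<union> I \<in> indep M"
  shows "card X \<le> 2"
proof -
  have Q: "{a, b, c, d} \<subseteq> ground M - I" and ac: "insert a (insert c I) \<in> indep M"
    and rank: "rk M (I \<union> {a, b, c, d}) \<le> card I + 2"
    using cfg unfolding parallel_pair_config_def by simp_all
  have "I \<subseteq> insert a (insert c I)" by blast
  then have "finite I" using indep_finite[OF ac] by (rule finite_subset)
  moreover have "X \<inter> I = {}" using X Q by blast
  ultimately have "card X + card I = card (X \<union> I)"
    using card_Un_disjoint[OF finite_subset[OF X]] by simp
  also have "\<dots> \<le> rk M (I \<union> {a, b, c, d})" using X by (intro rk_ge_card[OF _ indep]) blast
  finally show ?thesis using rank by simp
qed

lemma parallel_pair_config_indep_iff:
  assumes cfg: "parallel_pair_config M I a b c d" and X: "X \<subseteq> {a, b, c, d}"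
  shows "X \<union> I \<in> indep M \<longleftrightarrow>
    card X \<le> 2 \<and> \<not> {a, b} \<subseteq> X \<and> ({c, d} \<subseteq> X \<longrightarrow> insert c (insert d I) \<in> indep M)"
proof
  assume indep: "X \<union> I \<in> indep M"
  have "insert a (insert b I) \<notin> indep M" using cfg unfolding parallel_pair_config_def by simp
  then have "\<not> {a, b} \<subseteq> X" using indep_subset[OF indep, of "insert a (insert b I)"] by blast
  moreover have "insert c (insert d I) \<in> indep M" if "{c, d} \<subseteq> X"
    using indep_subset[OF indep, of "insert c (insert d I)"] that by blast
  ultimately show "card X \<le> 2 \<and> \<not> {a, b} \<subseteq> X \<and> ({c, d} \<subseteq> X \<longrightarrow> insert c (insert d I) \<in> indep M)"
    using parallel_pair_config_card_le_2[OF cfg X indep] by blast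
next
  assume h: "card X \<le> 2 \<and> \<not> {a, b} \<subseteq> X \<and> ({c, d} \<subseteq> X \<longrightarrow> insert c (insert d I) \<in> indep M)"
  have "distinct [a, b, c, d]"
    and "insert a (insert c I) \<in> indep M" "insert a (insert d I) \<in> indep M"
    and "insert b (insert c I) \<in> indep M" "insert b (insert d I) \<in> indep M"
    using cfg unfolding parallel_pair_config_def by simp_all
  show "X \<union> I \<in> indep M"
  proof (cases "{c, d} \<subseteq> X")
    case True
    have "card {c, d} = 2" using \<open>distinct [a, b, c, d]\<close> by simp
    moreover have "card {c, d} \<le> card X" using card_mono[OF finite_subset[OF X] True] by simp
    ultimately have "X = {c, d}" using card_subset_eq[OF finite_subset[OF X] True] h by simp
    then show ?thesis using h True by simp
  next
    case False
    then obtain p q where "X \<subseteq> {p, q}" "insert p (insert q I) \<in> indep M"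
      using subset_quadruple_cases[OF X] h
        \<open>insert a (insert c I) \<in> indep M\<close> \<open>insert a (insert d I) \<in> indep M\<close>
        \<open>insert b (insert c I) \<in> indep M\<close> \<open>insert b (insert d I) \<in> indep M\<close> by metis
    then show ?thesis using indep_subset[of "insert p (insert q I)" "X \<union> I"] by blast
  qed
qed

lemma parallel_pair_config_minor:
  assumes cfg: "parallel_pair_config M I a b c d"
  obtains N where "is_minor N M" "ground N = {a, b, c, d}"
    "\<And>X. X \<subseteq> {a, b, c, d} \<Longrightarrow> X \<in> indep N \<longleftrightarrow>
       card X \<le> 2 \<and> \<not> {a, b} \<subseteq> X \<and> ({c, d} \<subseteq> X \<longrightarrow> insert c (insert d I) \<in> indep M)"
proof -
  have Q: "{a, b, c, d} \<subseteq> ground M - I" and ac: "insert a (insert c I) \<in> indep M"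
    using cfg unfolding parallel_pair_config_def by simp_all
  have "I \<in> indep M" using indep_subset[OF ac, of I] by blast
  note N = contract_restrict_minor[OF this Q]
  show ?thesis
    using that[OF N(1,2)] N(3) parallel_pair_config_indep_iff[OF cfg] by blast
qed

lemma parallel_pair_config_minor_T24:
  assumes cfg: "parallel_pair_config M I a b c d" and cd: "insert c (insert d I) \<in> indep M"
  shows "\<exists>N. is_minor N M \<and> matroid_iso N (minimal_matroid 2 4)"
proof -
  let ?Q = "{a, b, c, d}"
  obtain N where N: "is_minor N M" "ground N = ?Q"
    "\<And>X. X \<subseteq> ?Q \<Longrightarrow> X \<in> indep N \<longleftrightarrow> card X \<le> 2 \<and> \<not> {a, b} \<subseteq> X"
    using parallel_pair_config_minor[OF cfg] cd by metis
  have "distinct [a, b, c, d]" using cfg unfolding parallel_pair_config_def by simp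
  define f where "f x = (if x = a then 3 else if x = b then 4 else if x = c then 1 else 2 :: nat)"
    for x
  have fv: "f a = 3" "f b = 4" "f c = 1" "f d = 2"
    using \<open>distinct [a, b, c, d]\<close> by (auto simp: f_def)
  have inj: "inj_on f ?Q" unfolding inj_on_def using fv by auto
  have im: "f ` ?Q = {1, 2, 3, 4}" using fv by auto
  have "X \<in> indep N \<longleftrightarrow> f ` X \<in> indep (minimal_matroid 2 4)" if X: "X \<subseteq> ?Q" for X
  proof -
    have "card (f ` X) = card X" using card_image[OF inj_on_subset[OF inj X]] .
    moreover have "{3, 4} \<subseteq> f ` X \<longleftrightarrow> {a, b} \<subseteq> X"
      using inj_on_image_mem_iff[OF inj _ X, of a] inj_on_image_mem_iff[OF inj _ X, of b] fv by simp
    moreover have "f ` X \<subseteq> {1, 2, 3, 4}" using X im by blast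
    ultimately show ?thesis unfolding N(3)[OF X] indep_T24_iff by simp
  qed
  moreover have "bij_betw f (ground N) (ground (minimal_matroid 2 4))"
    unfolding bij_betw_def N(2) ground_T24 using inj im by simp
  ultimately have "matroid_iso N (minimal_matroid 2 4)" unfolding matroid_iso_def N(2) by blast
  then show ?thesis using N(1) by blast
qed

lemma parallel_pair_config_minor_U12_U12:
  assumes cfg: "parallel_pair_config M I a b c d" and cd: "insert c (insert d I) \<notin> indep M"
  shows "\<exists>N. is_minor N M \<and> matroid_iso N (direct_sum (uniform 1 2) (uniform 1 2))"
proof -
  let ?Q = "{a, b, c, d}" and ?U = "direct_sum (uniform 1 2) (uniform 1 2)"
  obtain N where N: "is_minor N M" "ground N = ?Q"
    "\<And>X. X \<subseteq> ?Q \<Longrightarrow> X \<in> indep N \<longleftrightarrow> card X \<le> 2 \<and> \<not> {a, b} \<subseteq> X \<and> \<not> {c, d} \<subseteq> X"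
    using parallel_pair_config_minor[OF cfg] cd by metis
  have "distinct [a, b, c, d]" using cfg unfolding parallel_pair_config_def by simp
  define f where
    "f x = (if x = a then Inl 1 else if x = b then Inl 2 else if x = c then Inr 1
      else Inr 2 :: nat + nat)"
    for x
  have fv: "f a = Inl 1" "f b = Inl 2" "f c = Inr 1" "f d = Inr 2"
    using \<open>distinct [a, b, c, d]\<close> by (auto simp: f_def)
  have inj: "inj_on f ?Q" unfolding inj_on_def using fv by auto
  have im: "f ` ?Q = {Inl 1, Inl 2, Inr 1, Inr 2}" using fv by auto
  have "X \<in> indep N \<longleftrightarrow> f ` X \<in> indep ?U" if X: "X \<subseteq> ?Q" for X
  proof -
    have mem: "f x \<in> f ` X \<longleftrightarrow> x \<in> X" if "x \<in> ?Q" for x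
      using inj_on_image_mem_iff[OF inj that X] .
    have "{Inl 1, Inl 2} \<subseteq> f ` X \<longleftrightarrow> {a, b} \<subseteq> X" "{Inr 1, Inr 2} \<subseteq> f ` X \<longleftrightarrow> {c, d} \<subseteq> X"
      using mem[of a] mem[of b] mem[of c] mem[of d] unfolding fv insert_subset by simp_all
    moreover have "f ` X \<subseteq> {Inl 1, Inl 2, Inr 1, Inr 2}" using X im by blast
    moreover have "card X \<le> 2" if "\<not> {a, b} \<subseteq> X" "\<not> {c, d} \<subseteq> X"
      using subset_quadruple_cases[OF X that] card_le_2_if_subset_doubleton by metis
    ultimately show ?thesis unfolding N(3)[OF X] indep_U12_U12_iff by blast
  qed
  moreover have "bij_betw f (ground N) (ground ?U)"
    unfolding bij_betw_def N(2) ground_U12_U12 using inj im by simp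
  ultimately have "matroid_iso N ?U" unfolding matroid_iso_def N(2) by blast
  then show ?thesis using N(1) by blast
qed

lemma forbidden_minor_if_core_not_uniform:
  assumes Y: "Y \<subseteq> core M" "card Y \<le> rk M (core M)" "Y \<notin> indep M"
  shows "(\<exists>N. is_minor N M \<and> matroid_iso N (minimal_matroid 2 4)) \<or>
         (\<exists>N. is_minor N M \<and> matroid_iso N (direct_sum (uniform 1 2) (uniform 1 2)))"
proof -
  have "finite Y" using Y(1) finite_ground unfolding core_def by (meson Diff_subset finite_subset)
  moreover have "{y} \<in> indep M" if "y \<in> Y" for y using that Y(1) unfolding core_def loops_def
    by blast
  ultimately obtain J a b where J: "insert a (insert b J) \<subseteq> Y" "parallel_over M J a b"
    using dependent_contains_parallel_over[OF _ Y(3)] by metis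
  then have "card J + 2 \<le> card Y"
    using card_mono[OF \<open>finite Y\<close> J(1)] indep_finite[of "insert a J"]
    unfolding parallel_over_def by (simp add: card_insert_if)
  then have "card J + 2 \<le> rk M (core M)" using Y(2) by simp
  moreover have "insert a (insert b J) \<subseteq> core M" using J(1) Y(1) by blast
  ultimately obtain I where I: "insert a (insert b I) \<subseteq> core M" "parallel_over M I a b"
    "card I + 2 = rk M (core M)"
    using parallel_over_extend[OF J(2)] by metis
  obtain c d where cfg: "parallel_pair_config M I a b c d"
    by (rule parallel_pair_config_exists[OF I(2,1,3)])
  show ?thesis
    using parallel_pair_config_minor_T24[OF cfg] parallel_pair_config_minor_U12_U12[OF cfg]
    by (cases "insert c (insert d I) \<in> indep M") simp_all
qed

end

theorem proposition4p9:
  fixes M :: "'a matroid"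
  assumes "matroid M"
  shows "(\<exists>m r s l. r \<le> s \<and>
            matroid_iso M (direct_sum (direct_sum (uniform 0 m) (uniform r s)) (uniform l l)))
         \<longleftrightarrow>
         (\<not> (\<exists>N. is_minor N M \<and> matroid_iso N (minimal_matroid 2 4)) \<and>
          \<not> (\<exists>N. is_minor N M \<and> matroid_iso N (direct_sum (uniform 1 2) (uniform 1 2))))"
proof -
  interpret finite_matroid M by unfold_locales (rule assms)
  show ?thesis
  proof
    assume "\<exists>m r s l. r \<le> s \<and>
      matroid_iso M (direct_sum (direct_sum (uniform 0 m) (uniform r s)) (uniform l l))"
    then obtain m r s l
      where "matroid_iso M (direct_sum (direct_sum (uniform 0 m) (uniform r s)) (uniform l l))"
      by blast
    then obtain L S K where "loop_uniform_coloop M L S K r"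
      using loop_uniform_coloop_transport[OF _ loop_uniform_coloop_normal_form indep_subset_ground]
      by blast
    then show "\<not> (\<exists>N. is_minor N M \<and> matroid_iso N (minimal_matroid 2 4)) \<and>
      \<not> (\<exists>N. is_minor N M \<and> matroid_iso N (direct_sum (uniform 1 2) (uniform 1 2)))"
      using loop_uniform_coloop_no_forbidden_minor by blast
  next
    assume "\<not> (\<exists>N. is_minor N M \<and> matroid_iso N (minimal_matroid 2 4)) \<and>
      \<not> (\<exists>N. is_minor N M \<and> matroid_iso N (direct_sum (uniform 1 2) (uniform 1 2)))"
    then show "\<exists>m r s l. r \<le> s \<and>
      matroid_iso M (direct_sum (direct_sum (uniform 0 m) (uniform r s)) (uniform l l))"
      using normal_form_if_core_uniform forbidden_minor_if_core_not_uniform by blast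
  qed
qed

end
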